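(* Let $G$ be a finite graph whose edges are totally ordered and labelled $e_1<e_2<\dots<e_m$. Suppose that for some $i$ and some $k>0$ the edges $e_i,e_{i+1},\dots,e_{i+k}$ are all positive, all join the same two distinct vertices $x,y$ of $G$, and no other edge of $G$ joins $x$ and $y$. Let $S$ be any spanning tree of $G$. Then the subword $a(e_i,S)a(e_{i+1},S)\cdots a(e_{i+k},S)$ of the activity word $a(S)$ is one of the following: (1) when $S$ contains none of $e_i,\dots,e_{i+k}$: $\ell\ell\cdots\ell$ or $dd\cdots d$ (all $k+1$ letters equal); (2) when $S$ contains exactly the edge $e_{i+j}$ among them, for some $0<j\le k$: $\ell^{j}\,D\,d^{k-j}$, i.e. $e_i,\dots,e_{i+j-1}$ are labelled $\ell$, $e_{i+j}$ is labelled $D$, and $e_{i+j+1},\dots,e_{i+k}$ are labelled $d$; (3) when $S$ contains exactly the first edge $e_i$ among them: $L\,d^{k}$ or $D\,d^{k}$.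
   Context: Tutte's activity: let $G$ be a graph with signed edges (each edge positive or negative) whose $m$ edges are totally ordered. For a spanning tree $S$ of $G$ and an edge $e$: if $e\in S$ and $e$ is positive, $e$ is internally active, letter $L$, if $e$ is the lowest-ordered edge of $G$ that reconnects the two components of $S-\{e\}$, and internally inactive, letter $D$, otherwise. If $e\notin S$ and $e$ is positive, $e$ is externally active, letter $\ell$, if $e$ is the lowest-ordered edge of the unique cycle contained in $S\cup\{e\}$, and externally inactive, letter $d$, otherwise. For negative edges the same rules give the barred letters $\overline{L},\overline{D},\overline{\ell},\overline{d}$. The letter of $e$ is denoted $a(e,S)$, and the activity word $a(S)$ is the word of length $m$ whose $r$-th letter is $a(e_r,S)$. *)

theory Defs
  imports Main
begin

(* A finite graph with m edges e_1 < ... < e_m, represented by their indices 1..m.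
   ends r = (u,w) gives the two endpoints of edge r (multi-edges and loops allowed);
   pos r says whether edge r is positive. *)

datatype letter = L | D | ell | dee | Lbar | Dbar | ellbar | deebar

definition adj :: "(nat \<Rightarrow> 'v \<times> 'v) \<Rightarrow> nat set \<Rightarrow> ('v \<times> 'v) set" where
  "adj ends F = {(u,w). \<exists>f\<in>F. ends f = (u,w) \<or> ends f = (w,u)}"

definition conn :: "(nat \<Rightarrow> 'v \<times> 'v) \<Rightarrow> nat set \<Rightarrow> 'v \<Rightarrow> 'v \<Rightarrow> bool" where
  "conn ends F u w \<longleftrightarrow> (u,w) \<in> (adj ends F)\<^sup>*"

definition spanning_tree :: "'v set \<Rightarrow> nat \<Rightarrow> (nat \<Rightarrow> 'v \<times> 'v) \<Rightarrow> nat set \<Rightarrow> bool" where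
  "spanning_tree V m ends S \<longleftrightarrow>
     S \<subseteq> {1..m} \<and>
     (\<forall>u\<in>V. \<forall>w\<in>V. conn ends S u w) \<and>
     (\<forall>f\<in>S. \<not> conn ends (S - {f}) (fst (ends f)) (snd (ends f)))"

(* e in S is internally active: e is the lowest edge of G reconnecting the two components
   of S - {e}, i.e. lowest among edges whose endpoints lie in different components. *)
definition int_active :: "nat \<Rightarrow> (nat \<Rightarrow> 'v \<times> 'v) \<Rightarrow> nat set \<Rightarrow> nat \<Rightarrow> bool" where
  "int_active m ends S e \<longleftrightarrow>
     (\<forall>f\<in>{1..m}. \<not> conn ends (S - {e}) (fst (ends f)) (snd (ends f)) \<longrightarrow> e \<le> f)"

(* e not in S is externally active: e is the lowest edge of the unique cycle of S \<union> {e};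
   the edges of that cycle are exactly the edges f of S \<union> {e} whose endpoints remain
   connected in (S \<union> {e}) - {f}. *)
definition ext_active :: "(nat \<Rightarrow> 'v \<times> 'v) \<Rightarrow> nat set \<Rightarrow> nat \<Rightarrow> bool" where
  "ext_active ends S e \<longleftrightarrow>
     (\<forall>f\<in>S \<union> {e}. conn ends ((S \<union> {e}) - {f}) (fst (ends f)) (snd (ends f)) \<longrightarrow> e \<le> f)"

definition act :: "nat \<Rightarrow> (nat \<Rightarrow> 'v \<times> 'v) \<Rightarrow> (nat \<Rightarrow> bool) \<Rightarrow> nat set \<Rightarrow> nat \<Rightarrow> letter" where
  "act m ends pos S e =
    (if e \<in> S then
       (if int_active m ends S e then (if pos e then L else Lbar) else (if pos e then D else Dbar))
     else
       (if ext_active ends S e then (if pos e then ell else ellbar) else (if pos e then dee else deebar)))"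

definition act_word :: "nat \<Rightarrow> (nat \<Rightarrow> 'v \<times> 'v) \<Rightarrow> (nat \<Rightarrow> bool) \<Rightarrow> nat set \<Rightarrow> letter list" where
  "act_word m ends pos S = map (act m ends pos S) [1..<m+1]"

end

theory Submission
  imports Defs
begin

text \<open>The window edges e_i, ..., e_(i+k) all join x and y, so any two of them form a
  2-cycle, and S, being acyclic, contains at most one of them. If S contains a window edge e,
  then e lies in the fundamental cycle of every later window edge (so these are d), while for
  an earlier window edge r the fundamental cycle is just e, r (so r is its minimum, letter
  ell); moreover e is internally inactive unless it is e_i, since removing e separates x
  from y and e_i reconnects them. If S contains no window edge, all window edges have the
  same fundamental cycle apart from themselves, and no tree edge is ordered between two of
  them, so they are all externally active or all inactive.\<close>

definition joins :: "(nat \<Rightarrow> 'v \<times> 'v) \<Rightarrow> nat \<Rightarrow> 'v \<Rightarrow> 'v \<Rightarrow> bool" where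
  "joins ends r u w \<longleftrightarrow> ends r = (u,w) \<or> ends r = (w,u)"

definition forest :: "(nat \<Rightarrow> 'v \<times> 'v) \<Rightarrow> nat set \<Rightarrow> bool" where
  "forest ends S \<longleftrightarrow> (\<forall>f\<in>S. \<not> conn ends (S - {f}) (fst (ends f)) (snd (ends f)))"

lemma forest_if_spanning_tree: "spanning_tree V m ends S \<Longrightarrow> forest ends S"
  unfolding spanning_tree_def forest_def by blast

lemma conn_sym: "conn ends F u w \<Longrightarrow> conn ends F w u"
proof -
  have "sym (adj ends F)" unfolding adj_def sym_def by auto
  then show "conn ends F u w \<Longrightarrow> conn ends F w u"
    unfolding conn_def by (rule symD[OF sym_rtrancl])
qed

lemma conn_ends_iff:
  "joins ends r u w \<Longrightarrow> conn ends F (fst (ends r)) (snd (ends r)) \<longleftrightarrow> conn ends F u w"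
  unfolding joins_def by (auto intro: conn_sym)

lemma conn_if_joins: "r \<in> F \<Longrightarrow> joins ends r u w \<Longrightarrow> conn ends F u w"
  unfolding conn_def adj_def joins_def by (rule r_into_rtrancl) auto

lemma conn_insert_parallel:
  "e \<in> F \<Longrightarrow> joins ends e u w \<Longrightarrow> joins ends r u w \<Longrightarrow> conn ends (insert r F) = conn ends F"
proof -
  assume "e \<in> F" "joins ends e u w" "joins ends r u w"
  then have "adj ends (insert r F) = adj ends F" unfolding adj_def joins_def by auto
  then show ?thesis unfolding conn_def[abs_def] by simp
qed

lemma conn_insert_swap:
  "joins ends r u w \<Longrightarrow> joins ends r' u w \<Longrightarrow> conn ends (insert r F) = conn ends (insert r' F)"
proof -
  assume "joins ends r u w" "joins ends r' u w"
  then have "adj ends (insert r F) = adj ends (insert r' F)" unfolding adj_def joins_def by auto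
  then show ?thesis unfolding conn_def[abs_def] by simp
qed

lemma ext_active_iff:
  assumes "r \<notin> S"
  shows "ext_active ends S r \<longleftrightarrow>
    (\<forall>f\<in>S. conn ends (insert r (S - {f})) (fst (ends f)) (snd (ends f)) \<longrightarrow> r \<le> f)"
proof -
  have "(S \<union> {r}) - {f} = insert r (S - {f})" if "f \<in> S" for f
    using that assms by auto
  then show ?thesis unfolding ext_active_def by auto
qed

lemma not_ext_active_if_parallel_below:
  assumes "e \<in> S" "e < r" "joins ends e u w" "joins ends r u w"
  shows "\<not> ext_active ends S r"
proof -
  have "conn ends ((S \<union> {r}) - {e}) u w"
    using assms by (intro conn_if_joins[of r]) auto
  then have "conn ends ((S \<union> {r}) - {e}) (fst (ends e)) (snd (ends e))"
    using conn_ends_iff[OF assms(3)] by blast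
  then show ?thesis
    using assms(1,2) unfolding ext_active_def by force
qed

lemma ext_active_if_parallel_above:
  assumes "forest ends S" "e \<in> S" "r < e" "r \<notin> S" "joins ends e u w" "joins ends r u w"
  shows "ext_active ends S r"
  unfolding ext_active_iff[OF \<open>r \<notin> S\<close>]
proof (intro ballI impI)
  fix f assume "f \<in> S" and cycle: "conn ends (insert r (S - {f})) (fst (ends f)) (snd (ends f))"
  show "r \<le> f"
  proof (cases "f = e")
    case False
    then have "conn ends (insert r (S - {f})) = conn ends (S - {f})"
      using assms by (intro conn_insert_parallel[of e]) auto
    then show ?thesis
      using cycle \<open>f \<in> S\<close> \<open>forest ends S\<close> unfolding forest_def by simp
  qed (use \<open>r < e\<close> in simp)
qed

lemma not_int_active_if_parallel_below:
  assumes "forest ends S" "e \<in> S" "f \<in> {1..m}" "f < e" "joins ends e u w" "joins ends f u w"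
  shows "\<not> int_active m ends S e"
proof -
  have "\<not> conn ends (S - {e}) u w"
    using assms(1,2) conn_ends_iff[OF assms(5)] unfolding forest_def by blast
  then have "\<not> conn ends (S - {e}) (fst (ends f)) (snd (ends f))"
    using conn_ends_iff[OF assms(6)] by blast
  then show ?thesis
    using assms(3,4) unfolding int_active_def by force
qed

text \<open>Non-tree edges with the same endpoints have the same fundamental cycle, up to the
  edge itself.\<close>

lemma ext_active_parallel_iff:
  assumes "r \<notin> S" "r' \<notin> S" "joins ends r u w" "joins ends r' u w"
    and "\<forall>f\<in>S. r \<le> f \<longleftrightarrow> r' \<le> f"
  shows "ext_active ends S r \<longleftrightarrow> ext_active ends S r'"
  unfolding ext_active_iff[OF assms(1)] ext_active_iff[OF assms(2)]
  using assms(5) conn_insert_swap[OF assms(3,4)] by simp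

lemma act_word_window:
  assumes "1 \<le> i" "i + k \<le> m"
  shows "take (k+1) (drop (i-1) (act_word m ends pos S)) = map (act m ends pos S) [i..<i+k+1]"
proof -
  have "take (k+1) (drop (i-1) [1..<m+1]) = [i..<i+k+1]"
    using assms by (simp del: upt_Suc)
  then show ?thesis unfolding act_word_def drop_map take_map by simp
qed

lemma act_window_disjoint:
  assumes par: "\<forall>r\<in>{i..i+k}. pos r \<and> joins ends r x y" and disj: "S \<inter> {i..i+k} = {}"
  shows "map (act m ends pos S) [i..<i+k+1] = replicate (k+1) ell \<or>
    map (act m ends pos S) [i..<i+k+1] = replicate (k+1) dee"
proof -
  have act_r: "act m ends pos S r = act m ends pos S i" if "r \<in> {i..i+k}" for r
  proof -
    have "ext_active ends S r \<longleftrightarrow> ext_active ends S i"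
      using that par disj by (intro ext_active_parallel_iff[where u = x and w = y]) auto
    then show ?thesis
      using that par disj unfolding act_def by auto
  qed
  have "i \<notin> S" "pos i"
    using par disj by auto
  then have "act m ends pos S i \<in> {ell, dee}"
    unfolding act_def by simp
  moreover have "map (act m ends pos S) [i..<i+k+1] = replicate (k+1) (act m ends pos S i)"
    by (rule replicate_eqI) (auto simp del: upt_Suc intro: act_r)
  ultimately show ?thesis by auto
qed

lemma act_window_single:
  assumes "forest ends S" and par: "\<forall>r\<in>{i..i+k}. pos r \<and> joins ends r x y"
    and single: "S \<inter> {i..i+k} = {i+j}" and "j \<le> k"
  shows "map (act m ends pos S) [i..<i+k+1] =
    replicate j ell @ [act m ends pos S (i+j)] @ replicate (k-j) dee"
proof -
  have split: "[i..<i+k+1] = [i..<i+j] @ [i+j] @ [i+j+1..<i+k+1]"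
    using \<open>j \<le> k\<close> upt_add_eq_append[of i "i+j" "k+1-j"] upt_conv_Cons[of "i+j" "i+k+1"] by simp
  have e: "i + j \<in> S" "joins ends (i+j) x y"
    using single par \<open>j \<le> k\<close> by auto
  have below: "act m ends pos S r = ell" if "r \<in> set [i..<i+j]" for r
  proof -
    have r: "r \<in> {i..i+k}" "r \<noteq> i + j"
      using that \<open>j \<le> k\<close> by auto
    then have "r \<notin> S" "pos r" "joins ends r x y"
      using single par by auto
    then show ?thesis
      using ext_active_if_parallel_above[OF \<open>forest ends S\<close> e(1) _ _ e(2)] that
      unfolding act_def by auto
  qed
  have above: "act m ends pos S r = dee" if "r \<in> set [i+j+1..<i+k+1]" for r
  proof -
    have r: "r \<in> {i..i+k}" "r \<noteq> i + j"
      using that by auto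
    then have "r \<notin> S" "pos r" "joins ends r x y"
      using single par by auto
    then show ?thesis
      using not_ext_active_if_parallel_below[OF e(1) _ e(2)] that
      unfolding act_def by auto
  qed
  have "map (act m ends pos S) [i..<i+j] = replicate j ell"
    using below by (intro replicate_eqI) auto
  moreover have "map (act m ends pos S) [i+j+1..<i+k+1] = replicate (k-j) dee"
    using above by (intro replicate_eqI) auto
  ultimately show ?thesis unfolding split by simp
qed

theorem lemma3p2:
  fixes V :: "'v set" and m :: nat and ends :: "nat \<Rightarrow> 'v \<times> 'v" and pos :: "nat \<Rightarrow> bool"
    and S :: "nat set" and i k :: nat and x y :: 'v
  assumes finV: "finite V"
    and ends_in: "\<forall>r\<in>{1..m}. fst (ends r) \<in> V \<and> snd (ends r) \<in> V"
    and i1: "1 \<le> i" and ik: "i + k \<le> m" and kpos: "0 < k"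
    and xV: "x \<in> V" and yV: "y \<in> V" and xy: "x \<noteq> y"
    and par: "\<forall>r\<in>{i..i+k}. pos r \<and> (ends r = (x,y) \<or> ends r = (y,x))"
    and only: "\<forall>r\<in>{1..m} - {i..i+k}. ends r \<noteq> (x,y) \<and> ends r \<noteq> (y,x)"
    and ST: "spanning_tree V m ends S"
  shows "let w = take (k+1) (drop (i-1) (act_word m ends pos S)) in
     (S \<inter> {i..i+k} = {} \<longrightarrow> w = replicate (k+1) ell \<or> w = replicate (k+1) dee) \<and>
     (\<forall>j. 0 < j \<and> j \<le> k \<and> S \<inter> {i..i+k} = {i+j} \<longrightarrow>
          w = replicate j ell @ [D] @ replicate (k-j) dee) \<and>
     (S \<inter> {i..i+k} = {i} \<longrightarrow> w = L # replicate k dee \<or> w = D # replicate k dee)"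
proof -
  have forest: "forest ends S" using ST by (rule forest_if_spanning_tree)
  have par': "\<forall>r\<in>{i..i+k}. pos r \<and> joins ends r x y" using par unfolding joins_def .
  show ?thesis unfolding Let_def act_word_window[OF i1 ik]
  proof (intro conjI allI impI)
    assume "S \<inter> {i..i+k} = {}"
    then show "map (act m ends pos S) [i..<i+k+1] = replicate (k+1) ell \<or>
        map (act m ends pos S) [i..<i+k+1] = replicate (k+1) dee"
      by (rule act_window_disjoint[OF par'])
  next
    fix j assume j: "0 < j \<and> j \<le> k \<and> S \<inter> {i..i+k} = {i+j}"
    then have "\<not> int_active m ends S (i+j)"
      using i1 ik par'
      by (intro not_int_active_if_parallel_below[OF forest, where f = i and u = x and w = y]) auto
    then have "act m ends pos S (i+j) = D"
      using j par' unfolding act_def by auto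
    then show "map (act m ends pos S) [i..<i+k+1] = replicate j ell @ [D] @ replicate (k-j) dee"
      using act_window_single[OF forest par', of j] j by simp
  next
    assume single: "S \<inter> {i..i+k} = {i}"
    then have "act m ends pos S i \<in> {L, D}"
      using par' unfolding act_def by auto
    then show "map (act m ends pos S) [i..<i+k+1] = L # replicate k dee \<or>
        map (act m ends pos S) [i..<i+k+1] = D # replicate k dee"
      using act_window_single[OF forest par', of 0] single by auto
  qed
qed

end
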